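(* Let $G$ be a group acting on posets $P$ and $Q$ by order-preserving bijections, and let $\varphi:P\to Q$ be an order-preserving $G$-map (i.e. $\varphi(gx)=g\varphi(x)$ for all $g\in G$, $x\in P$). Let $R\subset Q$ be a subset containing exactly one representative of each $G$-orbit of $Q$. Assume that for each $r\in R$ we are given a $G_r$-equivariant acyclic matching $M_r$ on the subposet $\varphi^{-1}(r)$ (on which the stabilizer $G_r=\{g\in G\mid gr=r\}$ acts), and let $C_r$ denote the set of critical elements of $M_r$. Then there exists a $G$-equivariant acyclic matching on $P$ whose set of critical elements is \[\bigcup_{g\in G,\ r\in R} gC_r .\] Moreover, if $r\in R$ is such that $G_r$ acts transitively on $C_r$, then $G$ acts transitively on $\bigcup_{g\in G} gC_r$.
   Context: For a poset $P$, a partial matching is a set $M$ of pairs $(a,b)$ of elements of $P$ such that $b$ covers $a$ (i.e. $a<b$ and there is no $c$ with $a<c<b$), and each element of $P$ lies in at most one pair of $M$. It is acyclic if there is no cycle $b_1>a_1<b_2>a_2<\dots<b_t>a_t<b_1$ with $t\ge 2$, the $b_i$ pairwise distinct and $(a_i,b_i)\in M$ for all $i$. The critical elements of $M$ are the elements of $P$ contained in no pair of $M$. If a group $H$ acts on $P$, a matching $M$ is $H$-equivariant if $(a,b)\in M$ implies $(ha,hb)\in M$ for all $h\in H$. *)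

theory Defs
  imports "HOL-Algebra.Group_Action"
begin

text \<open>Posets are modelled as subsets S of a type with a partial order; the order on S
is the induced one.\<close>

definition covers_in :: "'a::order set \<Rightarrow> 'a \<Rightarrow> 'a \<Rightarrow> bool" where
  "covers_in S a b \<longleftrightarrow> a \<in> S \<and> b \<in> S \<and> a < b \<and> \<not> (\<exists>c\<in>S. a < c \<and> c < b)"

definition partial_matching :: "'a::order set \<Rightarrow> ('a \<times> 'a) set \<Rightarrow> bool" where
  "partial_matching S M \<longleftrightarrow>
     (\<forall>(a,b)\<in>M. covers_in S a b) \<and>
     (\<forall>p\<in>M. \<forall>q\<in>M. \<forall>x. x \<in> {fst p, snd p} \<and> x \<in> {fst q, snd q} \<longrightarrow> p = q)"

definition acyclic_matching :: "('a::order \<times> 'a) set \<Rightarrow> bool" where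
  "acyclic_matching M \<longleftrightarrow>
     \<not> (\<exists>t::nat. \<exists>a b :: nat \<Rightarrow> 'a. t \<ge> 2 \<and> inj_on b {..<t} \<and>
          (\<forall>i<t. (a i, b i) \<in> M \<and> a i < b (Suc i mod t)))"

definition critical_elems :: "'a set \<Rightarrow> ('a \<times> 'a) set \<Rightarrow> 'a set" where
  "critical_elems S M = {x \<in> S. \<forall>(a,b)\<in>M. x \<noteq> a \<and> x \<noteq> b}"

definition equivariant_matching :: "'g set \<Rightarrow> ('g \<Rightarrow> 'a \<Rightarrow> 'a) \<Rightarrow> ('a \<times> 'a) set \<Rightarrow> bool" where
  "equivariant_matching H act M \<longleftrightarrow> (\<forall>h\<in>H. \<forall>(a,b)\<in>M. (act h a, act h b) \<in> M)"

definition order_preserving_action ::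
  "('g, 'c) monoid_scheme \<Rightarrow> 'a::order set \<Rightarrow> ('g \<Rightarrow> 'a \<Rightarrow> 'a) \<Rightarrow> bool" where
  "order_preserving_action G S act \<longleftrightarrow> group_action G S act \<and>
     (\<forall>g\<in>carrier G. \<forall>x\<in>S. \<forall>y\<in>S. x \<le> y \<longrightarrow> act g x \<le> act g y)"

end

theory Submission
  imports Defs
begin

text \<open>Every matched pair of the desired matching on \<open>P\<close> lies in a single fibre of \<open>\<phi>\<close>, so
  it suffices to match each fibre \<open>\<phi>\<^sup>-\<^sup>1(q)\<close>. Write \<open>q = g r\<close> with \<open>r \<in> R\<close>; the element
  \<open>g\<close> is determined up to \<open>G\<^sub>r\<close>, so by \<open>G\<^sub>r\<close>-equivariance the translate \<open>g M\<^sub>r\<close> is a well-defined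
  matching of \<open>\<phi>\<^sup>-\<^sup>1(q)\<close>. Since \<open>\<phi>\<close> is monotone, a fibre is convex, so coverings in a fibre are
  coverings in \<open>P\<close>; and along any cycle \<open>b\<^sub>1 > a\<^sub>1 < b\<^sub>2 > \<dots>\<close> the values \<open>\<phi>(a\<^sub>i)\<close> increase
  cyclically, hence are constant, so every cycle lives in one fibre, where it would be a
  translate of a cycle of some \<open>M\<^sub>r\<close>.\<close>

lemma cyclically_increasing_const:
  fixes f :: "nat \<Rightarrow> 'a::order"
  assumes step: "\<And>i. i < t \<Longrightarrow> f i \<le> f (Suc i mod t)" and "i < t"
  shows "f i = f 0"
proof -
  define g where "g n = f (n mod t)" for n
  have "g n \<le> g (Suc n)" for n
    using step[of "n mod t"] \<open>i < t\<close> by (simp add: g_def mod_Suc_eq)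
  then have "g 0 \<le> g i" "g i \<le> g t"
    using lift_Suc_mono_le \<open>i < t\<close> by (metis le0, metis less_imp_le)
  then show ?thesis
    using \<open>i < t\<close> by (simp add: g_def)
qed

lemma covers_in_fibre:
  fixes f :: "'a::order \<Rightarrow> 'b::order"
  assumes mono: "\<forall>x\<in>S. \<forall>y\<in>S. x \<le> y \<longrightarrow> f x \<le> f y"
    and "covers_in {x\<in>S. f x = q} a b"
  shows "covers_in S a b"
proof -
  have a: "a \<in> S" "f a = q" and b: "b \<in> S" "f b = q" and "a < b"
    and no_between: "\<not> (\<exists>c\<in>{x\<in>S. f x = q}. a < c \<and> c < b)"
    using assms(2) unfolding covers_in_def by auto
  have "f c = q" if "c \<in> S" "a < c" "c < b" for c
  proof -
    have "f a \<le> f c" "f c \<le> f b"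
      using mono a(1) b(1) that by (meson less_imp_le)+
    then show ?thesis
      using a(2) b(2) by simp
  qed
  then show ?thesis
    using a b \<open>a < b\<close> no_between unfolding covers_in_def by blast
qed

lemma not_acyclic_matchingI:
  assumes "2 \<le> t" "inj_on b {..<t}" "\<forall>i<t. (a i, b i) \<in> M \<and> a i < b (Suc i mod t)"
  shows "\<not> acyclic_matching M"
  unfolding acyclic_matching_def not_not
  by (intro exI[of _ t] exI[of _ a] exI[of _ b]) (use assms in blast)

lemma acyclic_matching_fibrewise:
  fixes f :: "'a::order \<Rightarrow> 'b::order"
  assumes mono: "\<forall>x\<in>S. \<forall>y\<in>S. x \<le> y \<longrightarrow> f x \<le> f y"
    and pairs: "\<And>a b. (a, b) \<in> N \<Longrightarrow> a \<in> S \<and> b \<in> S \<and> f a = f b"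
    and fibres: "\<And>x. x \<in> S \<Longrightarrow> acyclic_matching {(a, b) \<in> N. f a = f x}"
  shows "acyclic_matching N"
  unfolding acyclic_matching_def
proof (intro notI, elim exE conjE)
  fix t a b
  assume t: "2 \<le> t" and inj: "inj_on b {..<t}"
    and cycle: "\<forall>i<t. (a i, b i) \<in> N \<and> a i < b (Suc i mod t)"
  have "f (a i) \<le> f (a (Suc i mod t))" if "i < t" for i
  proof -
    have "Suc i mod t < t"
      using that by (intro mod_less_divisor) simp
    then have "(a i, b i) \<in> N" "(a (Suc i mod t), b (Suc i mod t)) \<in> N" "a i < b (Suc i mod t)"
      using cycle that by blast+
    then have "a i \<in> S" "b (Suc i mod t) \<in> S" "f (a (Suc i mod t)) = f (b (Suc i mod t))"
      using pairs by blast+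
    then show ?thesis
      using mono \<open>a i < b (Suc i mod t)\<close> by (simp add: less_imp_le)
  qed
  then have const: "f (a i) = f (a 0)" if "i < t" for i
    using cyclically_increasing_const[where f = "\<lambda>i. f (a i)" and t = t, OF _ that] by blast
  have "(a 0, b 0) \<in> N"
    using cycle t by simp
  then have "a 0 \<in> S"
    using pairs by blast
  have "\<forall>i<t. (a i, b i) \<in> {(x, y) \<in> N. f x = f (a 0)} \<and> a i < b (Suc i mod t)"
  proof (intro allI impI)
    fix i assume "i < t"
    then show "(a i, b i) \<in> {(x, y) \<in> N. f x = f (a 0)} \<and> a i < b (Suc i mod t)"
      using cycle const[OF \<open>i < t\<close>] by simp
  qed
  then have "\<not> acyclic_matching {(x, y) \<in> N. f x = f (a 0)}"
    by (rule not_acyclic_matchingI[OF t inj])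
  then show False
    using fibres \<open>a 0 \<in> S\<close> by blast
qed

lemma acyclic_matching_transfer:
  assumes "acyclic_matching M'"
    and inj: "inj_on h S"
    and strict_mono: "\<And>x y. x \<in> S \<Longrightarrow> y \<in> S \<Longrightarrow> x < y \<Longrightarrow> h x < h y"
    and pairs: "\<And>a b. (a, b) \<in> M \<Longrightarrow> a \<in> S \<and> b \<in> S \<and> (h a, h b) \<in> M'"
  shows "acyclic_matching M"
  unfolding acyclic_matching_def
proof (intro notI, elim exE conjE)
  fix t a b
  assume t: "2 \<le> t" and "inj_on b {..<t}"
    and cycle: "\<forall>i<t. (a i, b i) \<in> M \<and> a i < b (Suc i mod t)"
  have "b i \<in> S" if "i < t" for i
    using cycle pairs that by blast
  then have "b ` {..<t} \<subseteq> S"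
    by auto
  then have "inj_on (\<lambda>i. h (b i)) {..<t}"
    using comp_inj_on[OF \<open>inj_on b {..<t}\<close> inj_on_subset[OF inj]] by (simp add: comp_def)
  moreover have "\<forall>i<t. (h (a i), h (b i)) \<in> M' \<and> h (a i) < h (b (Suc i mod t))"
  proof (intro allI impI)
    fix i assume "i < t"
    then have "Suc i mod t < t"
      by (intro mod_less_divisor) simp
    then have "(a i, b i) \<in> M" "(a (Suc i mod t), b (Suc i mod t)) \<in> M" "a i < b (Suc i mod t)"
      using cycle \<open>i < t\<close> by blast+
    then show "(h (a i), h (b i)) \<in> M' \<and> h (a i) < h (b (Suc i mod t))"
      using pairs strict_mono by blast
  qed
  ultimately have "\<not> acyclic_matching M'"
    by (rule not_acyclic_matchingI[OF t])
  then show False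
    using \<open>acyclic_matching M'\<close> by blast
qed

lemma (in group_action) transitive_on_translates:
  assumes "C \<subseteq> E" "H \<subseteq> carrier G" and trans: "\<forall>x\<in>C. \<forall>y\<in>C. \<exists>h\<in>H. \<phi> h x = y"
  shows "\<forall>x\<in>(\<Union>g\<in>carrier G. \<phi> g ` C). \<forall>y\<in>(\<Union>g\<in>carrier G. \<phi> g ` C). \<exists>g\<in>carrier G. \<phi> g x = y"
proof (intro ballI)
  interpret group G
    using group_hom group_hom.axioms(1) by blast
  fix x y
  assume "x \<in> (\<Union>g\<in>carrier G. \<phi> g ` C)" "y \<in> (\<Union>g\<in>carrier G. \<phi> g ` C)"
  then obtain g c g' c' where g: "g \<in> carrier G" "c \<in> C" "x = \<phi> g c"
    and g': "g' \<in> carrier G" "c' \<in> C" "y = \<phi> g' c'"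
    by blast
  obtain h where h: "h \<in> H" "\<phi> h c = c'"
    using trans g(2) g'(2) by blast
  have "c \<in> E" "x \<in> E" "h \<in> carrier G"
    using g h assms(1,2) element_image by blast+
  have "\<phi> (g' \<otimes> (h \<otimes> inv g)) x = \<phi> g' (\<phi> h (\<phi> (inv g) x))"
    using \<open>x \<in> E\<close> \<open>h \<in> carrier G\<close> g(1) g'(1) by (simp add: composition_rule)
  also have "\<phi> (inv g) x = c"
    using orbit_sym_aux g \<open>c \<in> E\<close> by blast
  finally have "\<phi> (g' \<otimes> (h \<otimes> inv g)) x = y"
    using h(2) g'(3) by simp
  then show "\<exists>k\<in>carrier G. \<phi> k x = y"
    using \<open>h \<in> carrier G\<close> g(1) g'(1) by blast
qed

locale order_preserving_group_action = group_action G E \<phi>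
  for G (structure) and E :: "'b::order set" and \<phi> +
  assumes action_mono: "\<lbrakk>g \<in> carrier G; x \<in> E; y \<in> E; x \<le> y\<rbrakk> \<Longrightarrow> \<phi> g x \<le> \<phi> g y"
begin

sublocale group G
  using group_hom group_hom.axioms(1) by blast

lemma action_inv_right: "\<lbrakk>g \<in> carrier G; x \<in> E\<rbrakk> \<Longrightarrow> \<phi> g (\<phi> (inv g) x) = x"
  using orbit_sym_aux[of "inv g" x] by simp

lemma action_less: "\<lbrakk>g \<in> carrier G; x \<in> E; y \<in> E; x < y\<rbrakk> \<Longrightarrow> \<phi> g x < \<phi> g y"
  using action_mono inj_prop by (metis inj_on_eq_iff order_less_le)

lemma action_less_iff:
  assumes "g \<in> carrier G" "x \<in> E" "y \<in> E"
  shows "\<phi> g x < \<phi> g y \<longleftrightarrow> x < y"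
proof
  assume "\<phi> g x < \<phi> g y"
  then have "\<phi> (inv g) (\<phi> g x) < \<phi> (inv g) (\<phi> g y)"
    using action_less assms element_image by simp
  then show "x < y"
    using orbit_sym_aux assms by simp
qed (use action_less assms in blast)

lemma covers_in_action:
  assumes "g \<in> carrier G" "covers_in E a b"
  shows "covers_in E (\<phi> g a) (\<phi> g b)"
proof -
  have a: "a \<in> E" and b: "b \<in> E" and "a < b" and no_between: "\<not> (\<exists>c\<in>E. a < c \<and> c < b)"
    using assms(2) unfolding covers_in_def by auto
  have "\<not> (\<phi> g a < c \<and> c < \<phi> g b)" if "c \<in> E" for c
  proof -
    have "\<phi> (inv g) c \<in> E" "c = \<phi> g (\<phi> (inv g) c)"
      using that assms(1) action_inv_right element_image[of "inv g" c] by simp_all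
    then show ?thesis
      using no_between action_less_iff assms(1) a b by metis
  qed
  then show ?thesis
    using assms(1) a b \<open>a < b\<close> action_less element_image unfolding covers_in_def by blast
qed

end

lemma order_preserving_action_iff:
  "order_preserving_action G S act \<longleftrightarrow> order_preserving_group_action G S act"
  unfolding order_preserving_action_def order_preserving_group_action_def
    order_preserving_group_action_axioms_def by auto

locale equivariant_fibred_matchings =
  fixes G :: "('g, 'c) monoid_scheme" (structure)
    and P :: "'a::order set" and Q :: "'b::order set"
    and \<alpha> :: "'g \<Rightarrow> 'a \<Rightarrow> 'a" and \<beta> :: "'g \<Rightarrow> 'b \<Rightarrow> 'b"
    and \<phi> :: "'a \<Rightarrow> 'b" and R :: "'b set"
    and M :: "'b \<Rightarrow> ('a \<times> 'a) set"
  assumes actP: "order_preserving_action G P \<alpha>"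
    and actQ: "order_preserving_action G Q \<beta>"
    and phi_maps: "\<phi> ` P \<subseteq> Q"
    and phi_mono: "\<forall>x\<in>P. \<forall>y\<in>P. x \<le> y \<longrightarrow> \<phi> x \<le> \<phi> y"
    and phi_equiv: "\<forall>g\<in>carrier G. \<forall>x\<in>P. \<phi> (\<alpha> g x) = \<beta> g (\<phi> x)"
    and R_sub: "R \<subseteq> Q"
    and R_reps: "\<forall>q\<in>Q. \<exists>!r. r \<in> R \<and> r \<in> orbit G \<beta> q"
    and M_match: "\<forall>r\<in>R. partial_matching {x\<in>P. \<phi> x = r} (M r)"
    and M_acyc: "\<forall>r\<in>R. acyclic_matching (M r)"
    and M_equiv: "\<forall>r\<in>R. equivariant_matching (stabilizer G \<beta> r) \<alpha> (M r)"
begin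

sublocale P: order_preserving_group_action G P \<alpha>
  using actP by (simp add: order_preserving_action_iff)

sublocale Q: group_action G Q \<beta>
  using actQ unfolding order_preserving_action_def by blast

definition induced_matching :: "('a \<times> 'a) set" where
  "induced_matching = {(\<alpha> g a, \<alpha> g b) | g a b r. g \<in> carrier G \<and> r \<in> R \<and> (a, b) \<in> M r}"

lemma fibre_matching_pair:
  assumes "r \<in> R" "(a, b) \<in> M r"
  shows "a \<in> P \<and> b \<in> P \<and> \<phi> a = r \<and> \<phi> b = r \<and> covers_in P a b"
proof -
  have "covers_in {x\<in>P. \<phi> x = r} a b"
    using M_match assms unfolding partial_matching_def by fast
  then show ?thesis
    using covers_in_fibre[OF phi_mono] unfolding covers_in_def by blast
qed

lemma representative_exists: "x \<in> P \<Longrightarrow> \<exists>h\<in>carrier G. \<beta> h (\<phi> x) \<in> R"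
  using R_reps phi_maps unfolding orbit_def by blast

lemma representative_unique:
  assumes "r \<in> R" "r' \<in> R" "h \<in> carrier G" "\<beta> h r' = r"
  shows "r = r'"
proof -
  have "r \<in> Q" "r' \<in> Q"
    using assms(1,2) R_sub by auto
  moreover have "\<beta> (inv h) r = r'"
    using Q.orbit_sym_aux assms(3,4) \<open>r' \<in> Q\<close> by blast
  then have "r' \<in> orbit G \<beta> r"
    using assms(3) unfolding orbit_def by blast
  ultimately show ?thesis
    using R_reps Q.orbit_refl assms(1,2) by blast
qed

lemma induced_matching_pair:
  assumes "(x, y) \<in> induced_matching"
  shows "x \<in> P \<and> y \<in> P \<and> \<phi> x = \<phi> y \<and> covers_in P x y"
  using assms fibre_matching_pair P.covers_in_action P.element_image phi_equiv
  unfolding induced_matching_def by fastforce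

text \<open>A pair of the induced matching moved into a fibre over \<open>R\<close> is a pair of the matching
  chosen there: the moving element is unique up to the stabiliser, under which that matching
  is invariant.\<close>

lemma induced_matching_translate:
  assumes "(x, y) \<in> induced_matching" "g \<in> carrier G" "r \<in> R" "\<beta> g (\<phi> x) = r"
  shows "(\<alpha> g x, \<alpha> g y) \<in> M r"
proof -
  obtain g' a b r' where xy: "x = \<alpha> g' a" "y = \<alpha> g' b" and g': "g' \<in> carrier G"
    and r': "r' \<in> R" "(a, b) \<in> M r'"
    using assms(1) unfolding induced_matching_def by blast
  have ab: "a \<in> P" "b \<in> P" "\<phi> a = r'"
    using fibre_matching_pair r' by auto
  then have "\<beta> (g \<otimes> g') r' = r"
    using assms(2,4) g' xy r' R_sub phi_equiv by (auto simp: Q.composition_rule)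
  moreover from this have "r = r'"
    using representative_unique assms(2,3) r' g' by blast
  ultimately have "g \<otimes> g' \<in> stabilizer G \<beta> r"
    using assms(2) g' unfolding stabilizer_def by auto
  then have "(\<alpha> (g \<otimes> g') a, \<alpha> (g \<otimes> g') b) \<in> M r"
    using M_equiv assms(3) r' \<open>r = r'\<close> unfolding equivariant_matching_def by fast
  then show ?thesis
    using xy ab assms(2) g' by (simp add: P.composition_rule)
qed

lemma induced_matching_equivariant: "equivariant_matching (carrier G) \<alpha> induced_matching"
  unfolding equivariant_matching_def
proof clarify
  fix h x y
  assume h: "h \<in> carrier G" and "(x, y) \<in> induced_matching"
  then obtain g a b r where "x = \<alpha> g a" "y = \<alpha> g b" "g \<in> carrier G" "r \<in> R" "(a, b) \<in> M r"
    unfolding induced_matching_def by blast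
  moreover from this have "\<alpha> h x = \<alpha> (h \<otimes> g) a" "\<alpha> h y = \<alpha> (h \<otimes> g) b"
    using fibre_matching_pair h by (auto simp: P.composition_rule)
  ultimately show "(\<alpha> h x, \<alpha> h y) \<in> induced_matching"
    unfolding induced_matching_def using h by blast
qed

lemma induced_matching_partial_matching: "partial_matching P induced_matching"
proof -
  have "p = q"
    if p: "p \<in> induced_matching" and q: "q \<in> induced_matching"
      and x: "x \<in> {fst p, snd p} \<and> x \<in> {fst q, snd q}" for p q x
  proof -
    obtain x1 y1 x2 y2 where pq: "p = (x1, y1)" "q = (x2, y2)"
      by fastforce
    have pair1: "x1 \<in> P" "y1 \<in> P" "\<phi> x1 = \<phi> y1" and pair2: "x2 \<in> P" "y2 \<in> P" "\<phi> x2 = \<phi> y2"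
      using induced_matching_pair p q pq by auto
    have "x \<in> {x1, y1}" "x \<in> {x2, y2}"
      using x pq by auto
    then have "\<phi> x1 = \<phi> x" "\<phi> x2 = \<phi> x" "x \<in> P"
      using pair1 pair2 by auto
    then obtain h where h: "h \<in> carrier G" "\<beta> h (\<phi> x) \<in> R"
      using representative_exists by blast
    have "(\<alpha> h x1, \<alpha> h y1) \<in> M (\<beta> h (\<phi> x))" "(\<alpha> h x2, \<alpha> h y2) \<in> M (\<beta> h (\<phi> x))"
      using induced_matching_translate p q pq h \<open>\<phi> x1 = \<phi> x\<close> \<open>\<phi> x2 = \<phi> x\<close> by auto
    moreover have "\<alpha> h x \<in> {\<alpha> h x1, \<alpha> h y1}" "\<alpha> h x \<in> {\<alpha> h x2, \<alpha> h y2}"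
      using \<open>x \<in> {x1, y1}\<close> \<open>x \<in> {x2, y2}\<close> by auto
    ultimately have "(\<alpha> h x1, \<alpha> h y1) = (\<alpha> h x2, \<alpha> h y2)"
      using M_match h(2) unfolding partial_matching_def by fastforce
    then show "p = q"
      using P.inj_prop[OF h(1)] pair1 pair2 pq by (auto dest: inj_onD)
  qed
  then show ?thesis
    using induced_matching_pair unfolding partial_matching_def by blast
qed

lemma induced_matching_acyclic: "acyclic_matching induced_matching"
proof (rule acyclic_matching_fibrewise[OF phi_mono])
  show "\<And>a b. (a, b) \<in> induced_matching \<Longrightarrow> a \<in> P \<and> b \<in> P \<and> \<phi> a = \<phi> b"
    using induced_matching_pair by blast
next
  fix x assume "x \<in> P"
  then obtain h where h: "h \<in> carrier G" "\<beta> h (\<phi> x) \<in> R"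
    using representative_exists by blast
  show "acyclic_matching {(a, b) \<in> induced_matching. \<phi> a = \<phi> x}"
  proof (rule acyclic_matching_transfer[where h = "\<alpha> h" and S = P])
    show "acyclic_matching (M (\<beta> h (\<phi> x)))"
      using M_acyc h(2) by blast
    show "inj_on (\<alpha> h) P"
      using P.inj_prop h(1) by blast
    show "\<And>a b. a \<in> P \<Longrightarrow> b \<in> P \<Longrightarrow> a < b \<Longrightarrow> \<alpha> h a < \<alpha> h b"
      using P.action_less h(1) by blast
    show "a \<in> P \<and> b \<in> P \<and> (\<alpha> h a, \<alpha> h b) \<in> M (\<beta> h (\<phi> x))"
      if "(a, b) \<in> {(a, b) \<in> induced_matching. \<phi> a = \<phi> x}" for a b
    proof -
      have ab: "(a, b) \<in> induced_matching" "\<phi> a = \<phi> x"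
        using that by auto
      then show ?thesis
        using induced_matching_pair[OF ab(1)] induced_matching_translate[OF ab(1) h(1) h(2)] by simp
    qed
  qed
qed

lemma matched_in_induced_matching_iff:
  assumes "x \<in> P" "h \<in> carrier G" "r \<in> R" "\<beta> h (\<phi> x) = r"
  shows "(\<exists>(a, b)\<in>induced_matching. x = a \<or> x = b) \<longleftrightarrow> (\<exists>(a, b)\<in>M r. \<alpha> h x = a \<or> \<alpha> h x = b)"
proof
  assume "\<exists>(a, b)\<in>induced_matching. x = a \<or> x = b"
  then obtain a b where ab: "(a, b) \<in> induced_matching" "x = a \<or> x = b"
    by blast
  then have "\<beta> h (\<phi> a) = r"
    using induced_matching_pair assms(4) by auto
  then show "\<exists>(a, b)\<in>M r. \<alpha> h x = a \<or> \<alpha> h x = b"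
    using induced_matching_translate ab assms(2,3) by blast
next
  assume "\<exists>(a, b)\<in>M r. \<alpha> h x = a \<or> \<alpha> h x = b"
  then obtain a b where ab: "(a, b) \<in> M r" "\<alpha> h x = a \<or> \<alpha> h x = b"
    by blast
  have "(\<alpha> (inv h) a, \<alpha> (inv h) b) \<in> induced_matching"
    unfolding induced_matching_def using ab(1) assms(2,3) by blast
  moreover have "\<alpha> (inv h) (\<alpha> h x) = x"
    using P.orbit_sym_aux assms(1,2) by blast
  ultimately show "\<exists>(a, b)\<in>induced_matching. x = a \<or> x = b"
    using ab(2) by auto
qed

lemma critical_elems_induced_matching:
  "critical_elems P induced_matching =
     (\<Union>g\<in>carrier G. \<Union>r\<in>R. \<alpha> g ` critical_elems {x\<in>P. \<phi> x = r} (M r))"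
proof (intro equalityI subsetI)
  fix x assume x: "x \<in> critical_elems P induced_matching"
  then have "x \<in> P"
    unfolding critical_elems_def by blast
  then obtain h where h: "h \<in> carrier G" "\<beta> h (\<phi> x) \<in> R"
    using representative_exists by blast
  then have "\<alpha> h x \<in> critical_elems {y\<in>P. \<phi> y = \<beta> h (\<phi> x)} (M (\<beta> h (\<phi> x)))"
    using x matched_in_induced_matching_iff[OF \<open>x \<in> P\<close> h(1) h(2) refl] P.element_image phi_equiv
    unfolding critical_elems_def by fastforce
  moreover have "x = \<alpha> (inv h) (\<alpha> h x)"
    using P.orbit_sym_aux \<open>x \<in> P\<close> h(1) by metis
  ultimately show "x \<in> (\<Union>g\<in>carrier G. \<Union>r\<in>R. \<alpha> g ` critical_elems {x\<in>P. \<phi> x = r} (M r))"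
    using h by blast
next
  fix y assume "y \<in> (\<Union>g\<in>carrier G. \<Union>r\<in>R. \<alpha> g ` critical_elems {x\<in>P. \<phi> x = r} (M r))"
  then obtain g r c where g: "g \<in> carrier G" and r: "r \<in> R" and y: "y = \<alpha> g c"
    and c: "c \<in> critical_elems {x\<in>P. \<phi> x = r} (M r)"
    by blast
  have "c \<in> P" "\<phi> c = r"
    using c unfolding critical_elems_def by auto
  then have "y \<in> P" "\<beta> (inv g) (\<phi> y) = r" "\<alpha> (inv g) y = c"
    using y g r R_sub phi_equiv P.element_image Q.orbit_sym_aux P.orbit_sym_aux by auto
  moreover have "\<not> (\<exists>(a, b)\<in>M r. c = a \<or> c = b)"
    using c unfolding critical_elems_def by blast
  ultimately show "y \<in> critical_elems P induced_matching"
    using matched_in_induced_matching_iff[of y "inv g" r] g r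
    unfolding critical_elems_def by auto
qed

end

theorem proposition6:
  fixes G :: "('g, 'c) monoid_scheme"
    and P :: "'a::order set" and Q :: "'b::order set"
    and \<alpha> :: "'g \<Rightarrow> 'a \<Rightarrow> 'a" and \<beta> :: "'g \<Rightarrow> 'b \<Rightarrow> 'b"
    and \<phi> :: "'a \<Rightarrow> 'b" and R :: "'b set"
    and M :: "'b \<Rightarrow> ('a \<times> 'a) set"
  assumes actP: "order_preserving_action G P \<alpha>"
    and actQ: "order_preserving_action G Q \<beta>"
    and phi_maps: "\<phi> ` P \<subseteq> Q"
    and phi_mono: "\<forall>x\<in>P. \<forall>y\<in>P. x \<le> y \<longrightarrow> \<phi> x \<le> \<phi> y"
    and phi_equiv: "\<forall>g\<in>carrier G. \<forall>x\<in>P. \<phi> (\<alpha> g x) = \<beta> g (\<phi> x)"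
    and R_sub: "R \<subseteq> Q"
    and R_reps: "\<forall>q\<in>Q. \<exists>!r. r \<in> R \<and> r \<in> orbit G \<beta> q"
    and M_match: "\<forall>r\<in>R. partial_matching {x\<in>P. \<phi> x = r} (M r)"
    and M_acyc: "\<forall>r\<in>R. acyclic_matching (M r)"
    and M_equiv: "\<forall>r\<in>R. equivariant_matching (stabilizer G \<beta> r) \<alpha> (M r)"
  shows "(\<exists>N. partial_matching P N \<and> acyclic_matching N \<and>
            equivariant_matching (carrier G) \<alpha> N \<and>
            critical_elems P N =
              (\<Union>g\<in>carrier G. \<Union>r\<in>R. \<alpha> g ` critical_elems {x\<in>P. \<phi> x = r} (M r)))
         \<and> (\<forall>r\<in>R.
              (\<forall>x\<in>critical_elems {x\<in>P. \<phi> x = r} (M r).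
                 \<forall>y\<in>critical_elems {x\<in>P. \<phi> x = r} (M r).
                   \<exists>h\<in>stabilizer G \<beta> r. \<alpha> h x = y)
              \<longrightarrow> (\<forall>x\<in>(\<Union>g\<in>carrier G. \<alpha> g ` critical_elems {x\<in>P. \<phi> x = r} (M r)).
                     \<forall>y\<in>(\<Union>g\<in>carrier G. \<alpha> g ` critical_elems {x\<in>P. \<phi> x = r} (M r)).
                       \<exists>g\<in>carrier G. \<alpha> g x = y))"
proof -
  interpret equivariant_fibred_matchings G P Q \<alpha> \<beta> \<phi> R M
    using assms by unfold_locales auto
  have "critical_elems {x\<in>P. \<phi> x = r} (M r) \<subseteq> P" for r
    unfolding critical_elems_def by blast
  note transitivity = P.transitive_on_translates[OF this Q.stabilizer_subset]
  show ?thesis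
    using induced_matching_partial_matching induced_matching_acyclic
      induced_matching_equivariant critical_elems_induced_matching transitivity
    by blast
qed

end
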